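(* Let $U,V\in\mathbb{R}_{\max}^{m\times n}$, $b,d\in\mathbb{R}_{\max}^m$, $p\in\mathbb{R}_{\max}^n$, $q\in(\mathbb{R}\cup\{+\infty\})^n$, and let $A$ and $B(\lambda)$ be the $(m+n+1)\times(n+1)$ matrices $$A=\begin{pmatrix} U & b\\ -\infty & p\\ q^- & -\infty\end{pmatrix},\qquad B(\lambda)=\begin{pmatrix} V & d\\ \lambda\otimes I & -\infty\\ -\infty & \lambda\end{pmatrix},\qquad \lambda\in\mathbb{R}.$$ Let $\mathcal{S}$ be the set of positional strategies of player Max and $\mathcal{T}$ the set of positional strategies of player Min. Then for every $\lambda\in\mathbb{R}$, $$\min_{\tau\in\mathcal{T}}\Phi_\tau(\lambda)=\Phi(\lambda)=\max_{\sigma\in\mathcal{S}}\Phi^{\sigma}(\lambda).$$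
   Context: Max-plus notation: $\mathbb{R}_{\max}=\mathbb{R}\cup\{-\infty\}$ with $a\oplus b=\max(a,b)$, $a\otimes b=a+b$, extended to matrices by $(A\oplus B)_{ij}=a_{ij}\oplus b_{ij}$ and $(A\otimes B)_{ij}=\max_k(a_{ik}+b_{kj})$. $I$ is the identity matrix (zeros on the diagonal, $-\infty$ off it). The conjugate $a^-$ of $a\in\mathbb{R}\cup\{\pm\infty\}$ is $-a$ if $a\in\mathbb{R}$, $+\infty$ if $a=-\infty$, $-\infty$ if $a=+\infty$; for a column vector $q$, $q^-$ is the row vector $(q_i^-)$. In $A$, the block "$-\infty$" in the second block row is the $n\times n$ all-$(-\infty)$ matrix, the last row is $(q^-,\,-\infty)$; in $B(\lambda)$, $\lambda\otimes I$ is the $n\times n$ matrix with $\lambda$ on the diagonal and $-\infty$ elsewhere, and the last row is $(-\infty,\dots,-\infty,\lambda)$. For matrices $A=(a_{ij}),B=(b_{ij})$ over $\mathbb{R}_{\max}$ of size $M\times N$, $A^{\sharp}B$ denotes the min-max map $f:\mathbb{R}^N\to\mathbb{R}^N$, $f_j(x)=\min_{k:\,a_{kj}\neq-\infty}\big(-a_{kj}+\max_{l:\,b_{kl}\neq -\infty}(b_{kl}+x_l)\big)$, and its cycle-time vector is $\chi(A^\sharp B)=\lim_{k\to\infty} f^k(0)/k$ (which exists). Standing assumption (needed for these objects to be defined): every column of $A$ and every row of $B(\lambda)$ contains a finite entry. A positional strategy of Max is a map $\sigma:\{1,\dots,m+n+1\}\to\{1,\dots,n+1\}$ with $B(\lambda)_{i\sigma(i)}\neq-\infty$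 for all $i$; a positional strategy of Min is a map $\tau:\{1,\dots,n+1\}\to\{1,\dots,m+n+1\}$ with $a_{\tau(j)j}\neq-\infty$ for all $j$. Define $A_\tau$ by $(A_\tau)_{ij}=a_{ij}$ if $i=\tau(j)$ and $-\infty$ otherwise, and $B^\sigma(\lambda)$ by $(B^\sigma(\lambda))_{ij}=B(\lambda)_{ij}$ if $j=\sigma(i)$ and $-\infty$ otherwise. Then $\Phi(\lambda)=\min_i\chi_i(A^\sharp B(\lambda))$, $\Phi_\tau(\lambda)=\min_i\chi_i(A_\tau^\sharp B(\lambda))$, $\Phi^\sigma(\lambda)=\min_i\chi_i(A^\sharp B^\sigma(\lambda))$. *)

theory Defs
  imports Complex_Main "HOL-Library.Extended_Real" "HOL-Library.FuncSet"
begin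

text \<open>Matrices over R_max are functions nat => nat => ereal, indexed from 0,
  with explicit dimensions; -\<infinity> is the max-plus zero. All entries used are
  assumed different from +\<infinity> (except the conjugate q^- handled by uminus on ereal).\<close>

definition minmax_map ::
  "nat \<Rightarrow> nat \<Rightarrow> (nat \<Rightarrow> nat \<Rightarrow> ereal) \<Rightarrow> (nat \<Rightarrow> nat \<Rightarrow> ereal) \<Rightarrow> (nat \<Rightarrow> real) \<Rightarrow> nat \<Rightarrow> real"
  where
  "minmax_map M N A B x j =
     Min {- real_of_ereal (A k j) +
            Max {real_of_ereal (B k l) + x l | l. l < N \<and> B k l \<noteq> -\<infinity>}
          | k. k < M \<and> A k j \<noteq> -\<infinity>}"

definition cycle_time ::
  "nat \<Rightarrow> nat \<Rightarrow> (nat \<Rightarrow> nat \<Rightarrow> ereal) \<Rightarrow> (nat \<Rightarrow> nat \<Rightarrow> ereal) \<Rightarrow> nat \<Rightarrow> real"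
  where
  "cycle_time M N A B j = lim (\<lambda>k. ((minmax_map M N A B ^^ k) (\<lambda>_. 0)) j / real k)"

definition Phi_val ::
  "nat \<Rightarrow> nat \<Rightarrow> (nat \<Rightarrow> nat \<Rightarrow> ereal) \<Rightarrow> (nat \<Rightarrow> nat \<Rightarrow> ereal) \<Rightarrow> real"
  where
  "Phi_val M N A B = Min {cycle_time M N A B i | i. i < N}"

definition matA ::
  "nat \<Rightarrow> nat \<Rightarrow> (nat \<Rightarrow> nat \<Rightarrow> ereal) \<Rightarrow> (nat \<Rightarrow> ereal) \<Rightarrow> (nat \<Rightarrow> ereal) \<Rightarrow> (nat \<Rightarrow> ereal)
   \<Rightarrow> nat \<Rightarrow> nat \<Rightarrow> ereal"
  where
  "matA m n U b p q i j =
     (if i < m then (if j < n then U i j else b i)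
      else if i < m + n then (if j < n then -\<infinity> else p (i - m))
      else (if j < n then - q j else -\<infinity>))"

definition matB ::
  "nat \<Rightarrow> nat \<Rightarrow> (nat \<Rightarrow> nat \<Rightarrow> ereal) \<Rightarrow> (nat \<Rightarrow> ereal) \<Rightarrow> real \<Rightarrow> nat \<Rightarrow> nat \<Rightarrow> ereal"
  where
  "matB m n V d lam i j =
     (if i < m then (if j < n then V i j else d i)
      else if i < m + n then (if j = i - m then ereal lam else -\<infinity>)
      else (if j = n then ereal lam else -\<infinity>))"

definition max_strategies ::
  "nat \<Rightarrow> nat \<Rightarrow> (nat \<Rightarrow> nat \<Rightarrow> ereal) \<Rightarrow> (nat \<Rightarrow> nat) set" where
  "max_strategies M N B = {\<sigma> \<in> {..<M} \<rightarrow>\<^sub>E {..<N}. \<forall>i<M. B i (\<sigma> i) \<noteq> -\<infinity>}"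

definition min_strategies ::
  "nat \<Rightarrow> nat \<Rightarrow> (nat \<Rightarrow> nat \<Rightarrow> ereal) \<Rightarrow> (nat \<Rightarrow> nat) set" where
  "min_strategies M N A = {\<tau> \<in> {..<N} \<rightarrow>\<^sub>E {..<M}. \<forall>j<N. A (\<tau> j) j \<noteq> -\<infinity>}"

definition restrict_min :: "(nat \<Rightarrow> nat \<Rightarrow> ereal) \<Rightarrow> (nat \<Rightarrow> nat) \<Rightarrow> nat \<Rightarrow> nat \<Rightarrow> ereal" where
  "restrict_min A \<tau> i j = (if i = \<tau> j then A i j else -\<infinity>)"

definition restrict_max :: "(nat \<Rightarrow> nat \<Rightarrow> ereal) \<Rightarrow> (nat \<Rightarrow> nat) \<Rightarrow> nat \<Rightarrow> nat \<Rightarrow> ereal" where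
  "restrict_max B \<sigma> i j = (if j = \<sigma> i then B i j else -\<infinity>)"

end

theory Submission
  imports Defs
begin

(* A min-max map f = A^sharp B is monotone and additively homogeneous, so u -> f (beta u) is a
   beta-contraction with a fixed point v_beta, and v_beta is the value of a discounted game whose
   optimal positional strategies are read off where the Min and Max in f are attained. Along
   beta_n = 1 - 1/(n + 2) some pair (tau, sigma) is optimal infinitely often, and for the resulting
   one-player dynamics v_beta = eta / (1 - beta) + x + O(1 - beta). Inserting this expansion into
   the optimality inequalities yields Kohlberg's invariant half-line: for large t, x + t eta is
   sub-invariant for A_tau^sharp B and super-invariant for A^sharp B^sigma. As
   A^sharp B^sigma <= A^sharp B <= A_tau^sharp B pointwise, all three maps have cycle time eta,
   while the same sandwich bounds chi(A_tau'^sharp B) from below and chi(A^sharp B^sigma') from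
   above for every other pair of strategies. *)

section \<open>Min-max maps and positional strategies\<close>

definition maxplus_row :: "nat \<Rightarrow> (nat \<Rightarrow> nat \<Rightarrow> ereal) \<Rightarrow> nat \<Rightarrow> (nat \<Rightarrow> real) \<Rightarrow> real" where
  "maxplus_row N B k u = Max {real_of_ereal (B k l) + u l | l. l < N \<and> B k l \<noteq> -\<infinity>}"

definition no_zero_column :: "nat \<Rightarrow> nat \<Rightarrow> (nat \<Rightarrow> nat \<Rightarrow> ereal) \<Rightarrow> bool" where
  "no_zero_column M N A \<longleftrightarrow> (\<forall>j<N. \<exists>k<M. A k j \<noteq> -\<infinity>)"

definition no_zero_row :: "nat \<Rightarrow> nat \<Rightarrow> (nat \<Rightarrow> nat \<Rightarrow> ereal) \<Rightarrow> bool" where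
  "no_zero_row M N B \<longleftrightarrow> (\<forall>k<M. \<exists>l<N. B k l \<noteq> -\<infinity>)"

lemma minmax_map_eq_Min_maxplus_row:
  "minmax_map M N A B u j = Min {- real_of_ereal (A k j) + maxplus_row N B k u | k. k < M \<and> A k j \<noteq> -\<infinity>}"
  unfolding minmax_map_def maxplus_row_def by simp

lemma maxplus_row_ge:
  assumes "l < N" "B k l \<noteq> -\<infinity>"
  shows "real_of_ereal (B k l) + u l \<le> maxplus_row N B k u"
  unfolding maxplus_row_def by (rule Max_ge) (use assms in \<open>auto\<close>)

lemma maxplus_row_attained:
  assumes "no_zero_row M N B" "k < M"
  obtains l where "l < N" "B k l \<noteq> -\<infinity>" "maxplus_row N B k u = real_of_ereal (B k l) + u l"
proof -
  let ?S = "{real_of_ereal (B k l) + u l | l. l < N \<and> B k l \<noteq> -\<infinity>}"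
  have "?S \<noteq> {}" using assms unfolding no_zero_row_def by auto
  then have "Max ?S \<in> ?S" by (intro Max_in) auto
  then show ?thesis using that unfolding maxplus_row_def by auto
qed

lemma minmax_map_le:
  assumes "k < M" "A k j \<noteq> -\<infinity>"
  shows "minmax_map M N A B u j \<le> - real_of_ereal (A k j) + maxplus_row N B k u"
  unfolding minmax_map_eq_Min_maxplus_row
  by (rule Min_le) (use assms in \<open>auto\<close>)

lemma minmax_map_attained:
  assumes "no_zero_column M N A" "j < N"
  obtains k where "k < M" "A k j \<noteq> -\<infinity>"
    "minmax_map M N A B u j = - real_of_ereal (A k j) + maxplus_row N B k u"
proof -
  let ?S = "{- real_of_ereal (A k j) + maxplus_row N B k u | k. k < M \<and> A k j \<noteq> -\<infinity>}"
  have "?S \<noteq> {}" using assms unfolding no_zero_column_def by auto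
  then have "Min ?S \<in> ?S" by (intro Min_in) auto
  then show ?thesis using that unfolding minmax_map_eq_Min_maxplus_row by auto
qed

lemma minmax_map_restrict_min:
  assumes "\<tau> \<in> min_strategies M N A" "j < N"
  shows "minmax_map M N (restrict_min A \<tau>) B u j = - real_of_ereal (A (\<tau> j) j) + maxplus_row N B (\<tau> j) u"
proof -
  have "{- real_of_ereal (restrict_min A \<tau> k j) + maxplus_row N B k u | k. k < M \<and> restrict_min A \<tau> k j \<noteq> -\<infinity>}
      = {- real_of_ereal (A (\<tau> j) j) + maxplus_row N B (\<tau> j) u}"
    using assms unfolding min_strategies_def restrict_min_def by (auto simp: PiE_iff)
  then show ?thesis unfolding minmax_map_eq_Min_maxplus_row by simp
qed

lemma maxplus_row_restrict_max:
  assumes "\<sigma> \<in> max_strategies M N B" "k < M"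
  shows "maxplus_row N (restrict_max B \<sigma>) k u = real_of_ereal (B k (\<sigma> k)) + u (\<sigma> k)"
proof -
  have "{real_of_ereal (restrict_max B \<sigma> k l) + u l | l. l < N \<and> restrict_max B \<sigma> k l \<noteq> -\<infinity>}
      = {real_of_ereal (B k (\<sigma> k)) + u (\<sigma> k)}"
    using assms unfolding max_strategies_def restrict_max_def by (auto simp: PiE_iff)
  then show ?thesis unfolding maxplus_row_def by simp
qed

lemma min_strategyD:
  assumes "\<tau> \<in> min_strategies M N A" "j < N"
  shows "\<tau> j < M" "A (\<tau> j) j \<noteq> -\<infinity>"
  using assms unfolding min_strategies_def by (auto simp: PiE_iff)

lemma max_strategyD:
  assumes "\<sigma> \<in> max_strategies M N B" "k < M"
  shows "\<sigma> k < N" "B k (\<sigma> k) \<noteq> -\<infinity>"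
  using assms unfolding max_strategies_def by (auto simp: PiE_iff)

lemma no_zero_column_restrict_min:
  "\<tau> \<in> min_strategies M N A \<Longrightarrow> no_zero_column M N (restrict_min A \<tau>)"
  unfolding no_zero_column_def restrict_min_def by (auto dest: min_strategyD)

lemma no_zero_row_restrict_max:
  "\<sigma> \<in> max_strategies M N B \<Longrightarrow> no_zero_row M N (restrict_max B \<sigma>)"
  unfolding no_zero_row_def restrict_max_def by (auto dest: max_strategyD)

lemma minmax_map_le_restrict_min:
  assumes "\<tau> \<in> min_strategies M N A" "j < N"
  shows "minmax_map M N A B u j \<le> minmax_map M N (restrict_min A \<tau>) B u j"
  unfolding minmax_map_restrict_min[OF assms]
  using min_strategyD[OF assms] by (rule minmax_map_le)

lemma minmax_map_restrict_max_le:
  assumes "\<sigma> \<in> max_strategies M N B" "no_zero_column M N A" "j < N"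
  shows "minmax_map M N A (restrict_max B \<sigma>) u j \<le> minmax_map M N A B u j"
proof -
  obtain k where k: "k < M" "A k j \<noteq> -\<infinity>"
    "minmax_map M N A B u j = - real_of_ereal (A k j) + maxplus_row N B k u"
    using minmax_map_attained[OF assms(2,3)] .
  have "minmax_map M N A (restrict_max B \<sigma>) u j
      \<le> - real_of_ereal (A k j) + maxplus_row N (restrict_max B \<sigma>) k u"
    using k(1,2) by (rule minmax_map_le)
  also have "\<dots> \<le> - real_of_ereal (A k j) + maxplus_row N B k u"
    unfolding maxplus_row_restrict_max[OF assms(1) k(1)]
    using maxplus_row_ge[of "\<sigma> k" N B k u, OF max_strategyD[OF assms(1) k(1)]] by simp
  finally show ?thesis using k(3) by simp
qed

lemma exists_optimal_min_strategy:
  assumes "no_zero_column M N A"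
  obtains \<tau> where "\<tau> \<in> min_strategies M N A"
    "\<forall>j<N. minmax_map M N A B u j = minmax_map M N (restrict_min A \<tau>) B u j"
proof -
  have "\<forall>j\<in>{..<N}. \<exists>k. k < M \<and> A k j \<noteq> -\<infinity> \<and>
      minmax_map M N A B u j = - real_of_ereal (A k j) + maxplus_row N B k u"
    using minmax_map_attained[OF assms] by (metis lessThan_iff)
  then obtain \<tau> where \<tau>: "\<forall>j\<in>{..<N}. \<tau> j < M \<and> A (\<tau> j) j \<noteq> -\<infinity> \<and>
      minmax_map M N A B u j = - real_of_ereal (A (\<tau> j) j) + maxplus_row N B (\<tau> j) u"
    by metis
  have \<tau>': "restrict \<tau> {..<N} \<in> min_strategies M N A"
    using \<tau> unfolding min_strategies_def by auto
  show ?thesis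
    by (rule that[OF \<tau>']) (use \<tau> in \<open>simp add: minmax_map_restrict_min[OF \<tau>']\<close>)
qed

lemma exists_optimal_max_strategy:
  assumes "no_zero_row M N B"
  obtains \<sigma> where "\<sigma> \<in> max_strategies M N B"
    "\<forall>k<M. maxplus_row N B k u = maxplus_row N (restrict_max B \<sigma>) k u"
proof -
  have "\<forall>k\<in>{..<M}. \<exists>l. l < N \<and> B k l \<noteq> -\<infinity> \<and>
      maxplus_row N B k u = real_of_ereal (B k l) + u l"
    using maxplus_row_attained[OF assms] by (metis lessThan_iff)
  then obtain \<sigma> where \<sigma>: "\<forall>k\<in>{..<M}. \<sigma> k < N \<and> B k (\<sigma> k) \<noteq> -\<infinity> \<and>
      maxplus_row N B k u = real_of_ereal (B k (\<sigma> k)) + u (\<sigma> k)"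
    by metis
  have \<sigma>': "restrict \<sigma> {..<M} \<in> max_strategies M N B"
    using \<sigma> unfolding max_strategies_def by auto
  show ?thesis
    by (rule that[OF \<sigma>']) (use \<sigma> in \<open>simp add: maxplus_row_restrict_max[OF \<sigma>']\<close>)
qed

lemma finite_min_strategies: "finite (min_strategies M N A)"
  by (rule finite_subset[of _ "{..<N} \<rightarrow>\<^sub>E {..<M}"]) (auto simp: min_strategies_def finite_PiE)

lemma finite_max_strategies: "finite (max_strategies M N B)"
  by (rule finite_subset[of _ "{..<M} \<rightarrow>\<^sub>E {..<N}"]) (auto simp: max_strategies_def finite_PiE)

section \<open>Topical maps\<close>

(* Monotone and additively homogeneous on the first N coordinates, in a single condition. *)
definition topical :: "nat \<Rightarrow> ((nat \<Rightarrow> real) \<Rightarrow> nat \<Rightarrow> real) \<Rightarrow> bool" where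
  "topical N f \<longleftrightarrow> (\<forall>u w c. (\<forall>l<N. u l \<le> w l + c) \<longrightarrow> (\<forall>j<N. f u j \<le> f w j + c))"

lemma topicalD: "topical N f \<Longrightarrow> \<forall>l<N. u l \<le> w l + c \<Longrightarrow> j < N \<Longrightarrow> f u j \<le> f w j + c"
  unfolding topical_def by blast

lemma topical_mono: "topical N f \<Longrightarrow> \<forall>l<N. u l \<le> w l \<Longrightarrow> j < N \<Longrightarrow> f u j \<le> f w j"
  using topicalD[of N f u w 0] by simp

lemma topical_minmax_map:
  assumes "no_zero_column M N A" "no_zero_row M N B"
  shows "topical N (minmax_map M N A B)"
  unfolding topical_def
proof (intro allI impI)
  fix u w :: "nat \<Rightarrow> real" and c j
  assume uw: "\<forall>l<N. u l \<le> w l + c" and j: "j < N"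
  obtain k where k: "k < M" "A k j \<noteq> -\<infinity>"
    "minmax_map M N A B w j = - real_of_ereal (A k j) + maxplus_row N B k w"
    using minmax_map_attained[OF assms(1) j] .
  obtain l where l: "l < N" "B k l \<noteq> -\<infinity>" "maxplus_row N B k u = real_of_ereal (B k l) + u l"
    using maxplus_row_attained[OF assms(2) k(1)] .
  have "minmax_map M N A B u j \<le> - real_of_ereal (A k j) + maxplus_row N B k u"
    using k(1,2) by (rule minmax_map_le)
  also have "\<dots> \<le> - real_of_ereal (A k j) + maxplus_row N B k w + c"
    using l maxplus_row_ge[of l N B k w, OF l(1,2)] uw by force
  finally show "minmax_map M N A B u j \<le> minmax_map M N A B w j + c"
    using k(3) by simp
qed

lemma topical_funpow: "topical N f \<Longrightarrow> topical N (f ^^ k)"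
  by (induction k) (auto simp: topical_def)

lemma topical_conjugate: "topical N f \<Longrightarrow> topical N (\<lambda>u. - f (- u))"
  unfolding topical_def by (auto simp: algebra_simps)

lemma funpow_conjugate:
  fixes f :: "('a \<Rightarrow> 'b::group_add) \<Rightarrow> 'a \<Rightarrow> 'b"
  shows "((\<lambda>u. - f (- u)) ^^ k) u = - (f ^^ k) (- u)"
  by (induction k arbitrary: u) (auto simp: fun_Compl_def)

lemma funpow_le_funpow_topical:
  assumes "\<And>u j. j < N \<Longrightarrow> g u j \<le> h u j" "topical N h" "j < N"
  shows "(g ^^ k) z j \<le> (h ^^ k) z j"
  using assms(3)
proof (induction k arbitrary: j)
  case (Suc k)
  have "g ((g ^^ k) z) j \<le> h ((g ^^ k) z) j" using assms(1) Suc.prems .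
  also have "\<dots> \<le> h ((h ^^ k) z) j" using topical_mono[OF assms(2)] Suc by blast
  finally show ?case by simp
qed simp

lemma topical_discounted_contraction:
  assumes "topical N f" "0 \<le> \<beta>" "\<forall>l<N. \<bar>u l - w l\<bar> \<le> c" "j < N"
  shows "\<bar>f (\<lambda>l. \<beta> * u l) j - f (\<lambda>l. \<beta> * w l) j\<bar> \<le> \<beta> * c"
proof -
  have "\<forall>l<N. \<beta> * u l \<le> \<beta> * w l + \<beta> * c" "\<forall>l<N. \<beta> * w l \<le> \<beta> * u l + \<beta> * c"
    using assms(2,3) by (auto simp: abs_le_iff mult_left_mono simp flip: distrib_left)
  from this[THEN topicalD[OF assms(1)], OF assms(4)] show ?thesis by linarith
qed

lemma contraction_fixpoint:
  fixes g :: "(nat \<Rightarrow> real) \<Rightarrow> nat \<Rightarrow> real"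
  assumes \<beta>: "0 \<le> \<beta>" "\<beta> < 1"
    and contr: "\<And>u w c j. \<forall>l<N. \<bar>u l - w l\<bar> \<le> c \<Longrightarrow> j < N \<Longrightarrow> \<bar>g u j - g w j\<bar> \<le> \<beta> * c"
  obtains v where "\<forall>j<N. g v j = v j"
proof -
  define X where "X k = (g ^^ k) (\<lambda>_. 0)" for k
  define gap where "gap u w = (\<Sum>l<N. \<bar>u l - w l\<bar>)" for u w :: "nat \<Rightarrow> real"
  have X_Suc: "X (Suc k) = g (X k)" for k by (simp add: X_def)
  have gap_ge: "\<bar>u l - w l\<bar> \<le> gap u w" if "l < N" for u w l
    unfolding gap_def by (rule member_le_sum) (use that in auto)
  have step: "\<bar>X (Suc k) j - X k j\<bar> \<le> \<beta> ^ k * gap (X 1) (X 0)" if "j < N" for k j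
    using that
  proof (induction k arbitrary: j)
    case 0 then show ?case by (simp add: gap_ge)
  next
    case (Suc k)
    then have "\<forall>l<N. \<bar>X (Suc k) l - X k l\<bar> \<le> \<beta> ^ k * gap (X 1) (X 0)" by blast
    from contr[OF this Suc.prems] show ?case by (simp add: X_Suc mult.assoc)
  qed
  define v where "v j = X 0 j + (\<Sum>i. X (Suc i) j - X i j)" for j
  have X_lim: "(\<lambda>k. X k j) \<longlonglongrightarrow> v j" if j: "j < N" for j
  proof -
    have "summable (\<lambda>i. \<beta> ^ i * gap (X 1) (X 0))"
      using \<beta> by (intro summable_mult2 summable_geometric) simp
    then have "summable (\<lambda>i. X (Suc i) j - X i j)"
      by (rule summable_comparison_test[rotated]) (use step j in auto)
    then have "(\<lambda>k. X 0 j + (\<Sum>i<k. X (Suc i) j - X i j)) \<longlonglongrightarrow> v j"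
      unfolding v_def by (intro tendsto_add tendsto_const summable_LIMSEQ)
    then show ?thesis by (simp add: sum_lessThan_telescope[of "\<lambda>i. X i j"])
  qed
  have "g v j = v j" if j: "j < N" for j
  proof -
    have "(\<lambda>k. gap (X k) v) \<longlonglongrightarrow> 0"
      unfolding gap_def using X_lim
      by (intro tendsto_null_sum tendsto_rabs_zero) (simp add: LIM_zero)
    then have gap_lim: "(\<lambda>k. \<beta> * gap (X k) v) \<longlonglongrightarrow> 0"
      by (rule tendsto_mult_right_zero)
    have bound: "norm (X (Suc k) j - g v j) \<le> norm (\<beta> * gap (X k) v) * 1" for k
    proof -
      have "\<forall>l<N. \<bar>X k l - v l\<bar> \<le> gap (X k) v" using gap_ge by blast
      from contr[OF this j] have "\<bar>X (Suc k) j - g v j\<bar> \<le> \<beta> * gap (X k) v"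
        by (simp add: X_Suc)
      moreover have "0 \<le> gap (X k) v" unfolding gap_def by (rule sum_nonneg) simp
      ultimately show ?thesis using \<beta>(1) by (simp add: abs_mult)
    qed
    have "(\<lambda>k. X (Suc k) j - g v j) \<longlonglongrightarrow> 0"
      using bound by (intro tendsto_0_le[OF gap_lim always_eventually]) blast
    moreover have "(\<lambda>k. X (Suc k) j - g v j) \<longlonglongrightarrow> v j - g v j"
      using X_lim[OF j] by (intro tendsto_diff tendsto_const) (rule LIMSEQ_Suc)
    ultimately have "0 = v j - g v j" by (rule LIMSEQ_unique)
    then show ?thesis by simp
  qed
  then show ?thesis by (intro that allI impI)
qed

lemma topical_discounted_fixpoint:
  assumes "topical N f" "0 \<le> \<beta>" "\<beta> < 1"
  obtains v where "\<forall>j<N. f (\<lambda>l. \<beta> * v l) j = v j"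
proof (rule contraction_fixpoint[OF assms(2,3), where g = "\<lambda>v. f (\<lambda>l. \<beta> * v l)"])
  show "\<bar>f (\<lambda>l. \<beta> * u l) j - f (\<lambda>l. \<beta> * w l) j\<bar> \<le> \<beta> * c"
    if "\<forall>l<N. \<bar>u l - w l\<bar> \<le> c" "j < N" for u w c j
    using topical_discounted_contraction[OF assms(1,2) that] .
qed (rule that)

lemma topical_orbit_upper_bound:
  assumes f: "topical N f"
    and half_line: "\<forall>t\<ge>T. \<forall>j<N. f (\<lambda>l. x l + t * \<eta> l) j \<le> x j + (t + 1) * \<eta> j"
  obtains K where "\<forall>k j. j < N \<longrightarrow> (f ^^ k) (\<lambda>_. 0) j \<le> real k * \<eta> j + K"
proof -
  define z where "z l = x l + T * \<eta> l" for l
  define C where "C = (\<Sum>l<N. \<bar>z l\<bar>)"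
  have z_at: "z l = x l + T * \<eta> l" for l by (simp add: z_def)
  have z_le: "\<bar>z l\<bar> \<le> C" if "l < N" for l
    unfolding C_def by (rule member_le_sum) (use that in auto)
  have orbit: "(f ^^ k) z j \<le> z j + real k * \<eta> j" if "j < N" for k j
    using that
  proof (induction k arbitrary: j)
    case (Suc k)
    have "(f ^^ Suc k) z j \<le> f (\<lambda>l. z l + real k * \<eta> l) j"
      by (simp add: topical_mono[OF f _ Suc.prems] Suc.IH)
    also have "\<dots> = f (\<lambda>l. x l + (T + real k) * \<eta> l) j"
      by (simp add: z_def algebra_simps)
    also have "\<dots> \<le> x j + (T + real k + 1) * \<eta> j"
      using half_line Suc.prems by simp
    also have "\<dots> = z j + real (Suc k) * \<eta> j"
      by (simp add: z_at algebra_simps)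
    finally show ?case .
  qed simp
  have "(f ^^ k) (\<lambda>_. 0) j \<le> real k * \<eta> j + 2 * C" if j: "j < N" for k j
  proof -
    have "(f ^^ k) (\<lambda>_. 0) j \<le> (f ^^ k) z j + C"
    proof -
      have "\<forall>l<N. (\<lambda>_. 0) l \<le> z l + C"
      proof (intro allI impI)
        fix l assume "l < N"
        then show "(\<lambda>_. 0) l \<le> z l + C" using z_le[of l] abs_ge_minus_self[of "z l"] by simp
      qed
      from topicalD[OF topical_funpow[OF f] this j] show ?thesis .
    qed
    then show ?thesis using orbit[OF j, of k] z_le[OF j] by linarith
  qed
  then have "\<forall>k j. j < N \<longrightarrow> (f ^^ k) (\<lambda>_. 0) j \<le> real k * \<eta> j + 2 * C" by blast
  then show ?thesis by (rule that)
qed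

lemma topical_orbit_lower_bound:
  assumes f: "topical N f"
    and half_line: "\<forall>t\<ge>T. \<forall>j<N. x j + (t + 1) * \<eta> j \<le> f (\<lambda>l. x l + t * \<eta> l) j"
  obtains K where "\<forall>k j. j < N \<longrightarrow> real k * \<eta> j - K \<le> (f ^^ k) (\<lambda>_. 0) j"
proof -
  let ?g = "\<lambda>u. - f (- u)"
  have "\<forall>t\<ge>T. \<forall>j<N. ?g (\<lambda>l. - x l + t * - \<eta> l) j \<le> - x j + (t + 1) * - \<eta> j"
  proof (intro allI impI)
    fix t j assume t: "T \<le> t" and j: "j < N"
    have neg: "- (\<lambda>l. - x l + t * - \<eta> l) = (\<lambda>l. x l + t * \<eta> l)"
      by (simp add: fun_Compl_def add.commute)
    have "?g (\<lambda>l. - x l + t * - \<eta> l) j = - f (\<lambda>l. x l + t * \<eta> l) j"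
      unfolding neg by (simp add: fun_Compl_def)
    moreover have "x j + (t + 1) * \<eta> j \<le> f (\<lambda>l. x l + t * \<eta> l) j"
      using half_line t j by blast
    ultimately show "?g (\<lambda>l. - x l + t * - \<eta> l) j \<le> - x j + (t + 1) * - \<eta> j" by simp
  qed
  from topical_orbit_upper_bound[OF topical_conjugate[OF f] this]
  obtain K where K: "\<forall>k j. j < N \<longrightarrow> (?g ^^ k) (\<lambda>_. 0) j \<le> real k * - \<eta> j + K" .
  have "(?g ^^ k) (\<lambda>_. 0) j = - (f ^^ k) (\<lambda>_. 0) j" for k j
    unfolding funpow_conjugate by (simp add: fun_Compl_def)
  with K have "\<forall>k j. j < N \<longrightarrow> real k * \<eta> j - K \<le> (f ^^ k) (\<lambda>_. 0) j"
    by (simp add: algebra_simps)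
  then show ?thesis by (rule that)
qed

section \<open>Cycle times\<close>

lemma LIMSEQ_divide_of_bounded_deviation:
  fixes X :: "nat \<Rightarrow> real"
  assumes "\<And>k. \<bar>X k - real k * c\<bar> \<le> K"
  shows "(\<lambda>k. X k / real k) \<longlonglongrightarrow> c"
proof -
  have near: "\<bar>X k / real k - c\<bar> \<le> K / real k" if "k \<ge> 1" for k
  proof -
    have "X k / real k - c = (X k - real k * c) / real k"
      using that by (simp add: field_simps)
    then show ?thesis using assms[of k] by (simp add: divide_right_mono)
  qed
  have lower: "\<forall>\<^sub>F k in sequentially. c - K / real k \<le> X k / real k"
    using near by (intro eventually_sequentiallyI[of 1]) (simp add: abs_diff_le_iff)
  have upper: "\<forall>\<^sub>F k in sequentially. X k / real k \<le> c + K / real k"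
    using near by (intro eventually_sequentiallyI[of 1]) (simp add: abs_diff_le_iff)
  have "(\<lambda>k. c - K / real k) \<longlonglongrightarrow> c" "(\<lambda>k. c + K / real k) \<longlonglongrightarrow> c"
    using tendsto_diff[OF tendsto_const lim_const_over_n] tendsto_add[OF tendsto_const lim_const_over_n]
    by simp_all
  from tendsto_sandwich[OF lower upper this] show ?thesis .
qed

definition bounded_drift :: "nat \<Rightarrow> ((nat \<Rightarrow> real) \<Rightarrow> nat \<Rightarrow> real) \<Rightarrow> (nat \<Rightarrow> real) \<Rightarrow> bool" where
  "bounded_drift N f \<eta> \<longleftrightarrow> (\<exists>K. \<forall>k j. j < N \<longrightarrow> \<bar>(f ^^ k) (\<lambda>_. 0) j - real k * \<eta> j\<bar> \<le> K)"

lemma bounded_drift_LIMSEQ: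
  assumes "bounded_drift N f \<eta>" "j < N"
  shows "(\<lambda>k. (f ^^ k) (\<lambda>_. 0) j / real k) \<longlonglongrightarrow> \<eta> j"
proof -
  obtain K where "\<forall>k j. j < N \<longrightarrow> \<bar>(f ^^ k) (\<lambda>_. 0) j - real k * \<eta> j\<bar> \<le> K"
    using assms(1) unfolding bounded_drift_def by blast
  with assms(2) show ?thesis by (intro LIMSEQ_divide_of_bounded_deviation) blast
qed

lemma bounded_drift_between:
  assumes "\<forall>k j. j < N \<longrightarrow> real k * \<eta> j - K \<le> (g ^^ k) (\<lambda>_. 0) j"
    and "\<forall>k j. j < N \<longrightarrow> (h ^^ k) (\<lambda>_. 0) j \<le> real k * \<eta> j + K'"
    and "\<And>k j. j < N \<Longrightarrow> (g ^^ k) (\<lambda>_. 0) j \<le> (f ^^ k) (\<lambda>_. 0) j"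
    and "\<And>k j. j < N \<Longrightarrow> (f ^^ k) (\<lambda>_. 0) j \<le> (h ^^ k) (\<lambda>_. 0) j"
  shows "bounded_drift N f \<eta>"
  unfolding bounded_drift_def
proof (intro exI allI impI)
  fix k j assume j: "j < N"
  have "real k * \<eta> j - K \<le> (g ^^ k) (\<lambda>_. 0) j" "(h ^^ k) (\<lambda>_. 0) j \<le> real k * \<eta> j + K'"
    using assms(1,2) j by simp_all
  moreover have "(g ^^ k) (\<lambda>_. 0) j \<le> (f ^^ k) (\<lambda>_. 0) j" "(f ^^ k) (\<lambda>_. 0) j \<le> (h ^^ k) (\<lambda>_. 0) j"
    using assms(3,4)[OF j] .
  ultimately show "\<bar>(f ^^ k) (\<lambda>_. 0) j - real k * \<eta> j\<bar> \<le> \<bar>K\<bar> + \<bar>K'\<bar>"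
    using abs_ge_self[of K] abs_ge_self[of K'] by (intro abs_leI) linarith+
qed

lemma bounded_drift_le:
  assumes "bounded_drift N f \<eta>" "bounded_drift N g \<eta>'" "j < N"
    and "\<And>k. (f ^^ k) (\<lambda>_. 0) j \<le> (g ^^ k) (\<lambda>_. 0) j"
  shows "\<eta> j \<le> \<eta>' j"
proof (rule LIMSEQ_le[OF bounded_drift_LIMSEQ[OF assms(1,3)] bounded_drift_LIMSEQ[OF assms(2,3)]])
  show "\<exists>k0. \<forall>k\<ge>k0. (f ^^ k) (\<lambda>_. 0) j / real k \<le> (g ^^ k) (\<lambda>_. 0) j / real k"
    using assms(4) by (intro exI[of _ 0] allI impI divide_right_mono) simp_all
qed

lemma cycle_time_eq:
  "bounded_drift N (minmax_map M N A B) \<eta> \<Longrightarrow> j < N \<Longrightarrow> cycle_time M N A B j = \<eta> j"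
  unfolding cycle_time_def by (rule limI) (rule bounded_drift_LIMSEQ)

lemma Phi_val_eq_Min:
  assumes "bounded_drift N (minmax_map M N A B) \<eta>"
  shows "Phi_val M N A B = Min {\<eta> i | i. i < N}"
proof -
  have "{cycle_time M N A B i | i. i < N} = {\<eta> i | i. i < N}"
    using cycle_time_eq[OF assms] by force
  then show ?thesis unfolding Phi_val_def by simp
qed

section \<open>Discounted values of a one-player dynamics\<close>

lemma sum_window_periodic:
  fixes h :: "nat \<Rightarrow> real"
  assumes periodic: "\<And>i. i \<ge> P \<Longrightarrow> h (i + P) = h i" and "i \<ge> P"
  shows "(\<Sum>t<P. h (i + t)) = (\<Sum>t<P. h (P + t))"
  using assms(2)
proof (induction i rule: dec_induct)
  case (step i)
  have "(\<Sum>t<P. h (Suc i + t)) = (\<Sum>t<Suc P. h (i + t)) - h i"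
    by (subst sum.lessThan_Suc_shift) simp
  also have "\<dots> = (\<Sum>t<P. h (i + t))"
    using periodic[OF step(1)] by simp
  finally show ?case using step(3) by simp
qed simp

locale self_map =
  fixes N :: nat and s :: "nat \<Rightarrow> nat"
  assumes maps_to: "\<And>j. j < N \<Longrightarrow> s j < N"
begin

lemma funpow_maps_to: "j < N \<Longrightarrow> (s ^^ t) j < N"
  by (induction t) (auto simp: maps_to)

(* Each orbit becomes periodic before step N, with a period q \<le> N; N! is a multiple of all such q. *)
definition period :: nat where "period = fact N"

lemma period_pos: "period > 0"
  unfolding period_def by simp

lemma orbit_periodic:
  assumes j: "j < N" and i: "i \<ge> period"
  shows "(s ^^ (i + period)) j = (s ^^ i) j"
proof -
  let ?f = "\<lambda>i. (s ^^ i) j"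
  have "\<not> inj_on ?f {..N}"
  proof
    assume "inj_on ?f {..N}"
    moreover have "?f ` {..N} \<subseteq> {..<N}" using funpow_maps_to[OF j] by auto
    ultimately have "card {..N} \<le> card {..<N}" by (intro card_inj_on_le) auto
    then show False by simp
  qed
  then obtain a b where ab: "a < b" "b \<le> N" "?f a = ?f b"
    unfolding inj_on_def by (metis atMost_iff linorder_neqE_nat)
  define q where "q = b - a"
  have shift: "?f (i + q) = ?f i" if "i \<ge> a" for i
  proof -
    have "i + q = (i - a) + b" "i = (i - a) + a"
      using that ab unfolding q_def by simp_all
    then have "?f (i + q) = (s ^^ (i - a)) (?f b)" "?f i = (s ^^ (i - a)) (?f a)"
      by (metis funpow_add comp_apply)+
    then show ?thesis using ab(3) by simp
  qed
  have shifts: "?f (i + m * q) = ?f i" if "i \<ge> a" for i m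
  proof (induction m)
    case (Suc m)
    have "?f (i + Suc m * q) = ?f ((i + m * q) + q)" by (simp add: algebra_simps)
    also have "\<dots> = ?f (i + m * q)" using shift that by simp
    finally show ?case using Suc by simp
  qed simp
  have "q dvd period"
    unfolding period_def q_def using ab by (intro dvd_fact) auto
  then obtain m where "period = m * q" by (metis dvd_def mult.commute)
  moreover have "a \<le> i"
    using ab fact_ge_self[of N] i unfolding period_def by linarith
  ultimately show ?thesis using shifts by simp
qed

lemma funpow_period_idem: "j < N \<Longrightarrow> (s ^^ period) ((s ^^ period) j) = (s ^^ period) j"
  using orbit_periodic[of j period] by (simp add: funpow_add)

lemma sum_window_orbit:
  fixes h :: "nat \<Rightarrow> real"
  assumes "j < N" "i \<ge> period"
  shows "(\<Sum>t<period. h ((s ^^ (i + t)) j)) = (\<Sum>t<period. h ((s ^^ (period + t)) j))"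
  using sum_window_periodic[of period "\<lambda>t. h ((s ^^ t) j)", OF _ assms(2)]
    orbit_periodic[OF assms(1)] by simp

end

locale weighted_self_map = self_map +
  fixes w :: "nat \<Rightarrow> real"
begin

definition window_mean :: "(nat \<Rightarrow> real) \<Rightarrow> nat \<Rightarrow> real" where
  "window_mean h j = (\<Sum>t<period. h ((s ^^ (period + t)) j)) / period"

lemma window_mean_step: "j < N \<Longrightarrow> window_mean h (s j) = window_mean h j"
proof -
  assume j: "j < N"
  have "(\<Sum>t<period. h ((s ^^ (period + t)) (s j))) = (\<Sum>t<period. h ((s ^^ (Suc period + t)) j))"
    by (simp add: funpow_swap1 flip: funpow_Suc_right)
  also have "\<dots> = (\<Sum>t<period. h ((s ^^ (period + t)) j))"
    by (rule sum_window_orbit[OF j]) simp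
  finally show ?thesis unfolding window_mean_def by simp
qed

lemma window_mean_funpow: "j < N \<Longrightarrow> window_mean h ((s ^^ t) j) = window_mean h j"
  by (induction t) (auto simp: window_mean_step funpow_maps_to)

abbreviation cycle_mean :: "nat \<Rightarrow> real" where
  "cycle_mean \<equiv> window_mean w"

definition partial_bias :: "nat \<Rightarrow> nat \<Rightarrow> real" where
  "partial_bias Q j = (\<Sum>t<Q. w ((s ^^ t) j) - cycle_mean j)"

lemma partial_bias_step:
  assumes "j < N"
  shows "partial_bias Q j - partial_bias Q (s j) = w j - w ((s ^^ Q) j)"
proof -
  have "partial_bias Q j - partial_bias Q (s j) = (\<Sum>t<Q. w ((s ^^ t) j) - w ((s ^^ Suc t) j))"
    unfolding partial_bias_def window_mean_step[OF assms]
    by (simp add: sum_subtractf funpow_swap1 flip: funpow_Suc_right)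
  also have "\<dots> = w j - w ((s ^^ Q) j)"
    using sum_lessThan_telescope'[of "\<lambda>t. w ((s ^^ t) j)" Q] by simp
  finally show ?thesis .
qed

(* Averaging the partial sums over a full period makes cesaro_bias_step exact. *)
definition cesaro_bias :: "nat \<Rightarrow> real" where
  "cesaro_bias j = (\<Sum>r<period. partial_bias (period + r) j) / period"

lemma cesaro_bias_step:
  assumes "j < N"
  shows "cesaro_bias j - cesaro_bias (s j) = w j - cycle_mean j"
proof -
  have "cesaro_bias j - cesaro_bias (s j) = (\<Sum>r<period. w j - w ((s ^^ (period + r)) j)) / period"
    unfolding cesaro_bias_def partial_bias_step[OF assms, symmetric]
    by (simp add: sum_subtractf diff_divide_distrib)
  also have "\<dots> = w j - cycle_mean j"
    unfolding window_mean_def using period_pos by (simp add: sum_subtractf field_simps)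
  finally show ?thesis .
qed

(* Normalised to sum to zero over each period (sum_window_bias), which fixes the constant term
   of the expansion of the discounted value. *)
definition bias :: "nat \<Rightarrow> real" where
  "bias j = cesaro_bias j - window_mean cesaro_bias j"

lemma bias_step: "j < N \<Longrightarrow> bias j + cycle_mean j = w j + bias (s j)"
  using cesaro_bias_step window_mean_step unfolding bias_def by fastforce

lemma sum_window_bias:
  assumes "j < N" "i \<ge> period"
  shows "(\<Sum>t<period. bias ((s ^^ (i + t)) j)) = 0"
proof -
  have "(\<Sum>t<period. bias ((s ^^ (i + t)) j)) = (\<Sum>t<period. bias ((s ^^ (period + t)) j))"
    by (rule sum_window_orbit[OF assms])
  also have "\<dots> = (\<Sum>t<period. cesaro_bias ((s ^^ (period + t)) j)) - period * window_mean cesaro_bias j"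
    unfolding bias_def using window_mean_funpow[OF assms(1)] by (simp add: sum_subtractf)
  also have "\<dots> = 0"
    unfolding window_mean_def using period_pos by simp
  finally show ?thesis .
qed

lemma sum_bias_periodic_point:
  assumes "j < N"
  shows "(\<Sum>t<period. bias ((s ^^ Suc t) ((s ^^ period) j))) = 0"
proof -
  have "(s ^^ Suc t) ((s ^^ period) j) = (s ^^ (Suc period + t)) j" for t
  proof -
    have "Suc period + t = Suc t + period" by simp
    then show ?thesis by (simp only: funpow_add comp_apply)
  qed
  then have "(\<Sum>t<period. bias ((s ^^ Suc t) ((s ^^ period) j)))
      = (\<Sum>t<period. bias ((s ^^ (Suc period + t)) j))"
    by (simp only:)
  also have "\<dots> = 0" by (rule sum_window_bias[OF assms]) simp
  finally show ?thesis .
qed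

definition bias_norm :: real where
  "bias_norm = (\<Sum>i<N. \<bar>bias i\<bar>)"

lemma abs_bias_le: "i < N \<Longrightarrow> \<bar>bias i\<bar> \<le> bias_norm"
  unfolding bias_norm_def by (rule member_le_sum) auto

lemma bias_norm_nonneg: "0 \<le> bias_norm"
  unfolding bias_norm_def by (simp add: sum_nonneg)

end

locale discounted_solution = weighted_self_map +
  fixes \<beta> :: real and v :: "nat \<Rightarrow> real"
  assumes discount: "0 \<le> \<beta>" "\<beta> < 1"
    and value_eq: "\<And>j. j < N \<Longrightarrow> v j = w j + \<beta> * v (s j)"
begin

definition deviation :: "nat \<Rightarrow> real" where
  "deviation j = v j - cycle_mean j / (1 - \<beta>) - bias j"

lemma deviation_step:
  assumes "i < N"
  shows "deviation i = \<beta> * deviation (s i) - (1 - \<beta>) * bias (s i)"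
proof -
  have "bias i = w i + bias (s i) - cycle_mean i" using bias_step[OF assms] by simp
  then have "deviation i = \<beta> * v (s i) - cycle_mean i / (1 - \<beta>) + cycle_mean i - bias (s i)"
    unfolding deviation_def value_eq[OF assms] by simp
  also have "\<dots> = \<beta> * deviation (s i) - (1 - \<beta>) * bias (s i)"
    unfolding deviation_def window_mean_step[OF assms] using discount by (simp add: field_simps)
  finally show ?thesis .
qed

lemma deviation_funpow:
  assumes "i < N"
  shows "deviation i = \<beta> ^ k * deviation ((s ^^ k) i) - (1 - \<beta>) * (\<Sum>t<k. \<beta> ^ t * bias ((s ^^ Suc t) i))"
proof (induction k)
  case (Suc k)
  have "deviation ((s ^^ k) i) = \<beta> * deviation ((s ^^ Suc k) i) - (1 - \<beta>) * bias ((s ^^ Suc k) i)"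
    using deviation_step[OF funpow_maps_to[OF assms]] by simp
  with Suc have "deviation i = \<beta> ^ k * (\<beta> * deviation ((s ^^ Suc k) i) - (1 - \<beta>) * bias ((s ^^ Suc k) i))
      - (1 - \<beta>) * (\<Sum>t<k. \<beta> ^ t * bias ((s ^^ Suc t) i))"
    by simp
  then show ?case by (simp add: algebra_simps del: funpow.simps)
qed simp

lemma abs_weighted_bias_sum_le:
  assumes "i < N" "\<And>t. t < period \<Longrightarrow> \<bar>a t\<bar> \<le> C"
  shows "\<bar>\<Sum>t<period. a t * bias ((s ^^ Suc t) i)\<bar> \<le> period * (C * bias_norm)"
proof -
  have "\<bar>\<Sum>t<period. a t * bias ((s ^^ Suc t) i)\<bar> \<le> (\<Sum>t<period. \<bar>a t\<bar> * \<bar>bias ((s ^^ Suc t) i)\<bar>)"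
    by (rule order_trans[OF sum_abs]) (simp add: abs_mult)
  also have "\<dots> \<le> (\<Sum>t<period. C * bias_norm)"
  proof (rule sum_mono)
    fix t assume "t \<in> {..<period}"
    then have "\<bar>a t\<bar> \<le> C" using assms(2) by simp
    moreover have "\<bar>bias ((s ^^ Suc t) i)\<bar> \<le> bias_norm"
      by (rule abs_bias_le[OF funpow_maps_to[OF assms(1)]])
    ultimately show "\<bar>a t\<bar> * \<bar>bias ((s ^^ Suc t) i)\<bar> \<le> C * bias_norm"
      by (intro mult_mono) auto
  qed
  finally show ?thesis by simp
qed

(* After one period the orbit of a periodic point returns, and as bias sums to zero over it the
   weights beta^t may be replaced by beta^t - 1 = O(1 - beta). *)
lemma abs_deviation_periodic_le:
  assumes j: "j < N"
  shows "\<bar>deviation ((s ^^ period) j)\<bar> \<le> (1 - \<beta>) * (period * bias_norm)"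
proof -
  define c where "c = (s ^^ period) j"
  have c: "c < N" unfolding c_def by (rule funpow_maps_to[OF j])
  define S where "S = (\<Sum>t<period. \<beta> ^ t * bias ((s ^^ Suc t) c))"
  have "S = (\<Sum>t<period. (\<beta> ^ t - 1) * bias ((s ^^ Suc t) c))"
    using sum_bias_periodic_point[OF j, folded c_def] unfolding S_def by (simp add: algebra_simps sum_subtractf)
  also have "\<bar>\<dots>\<bar> \<le> period * ((1 - \<beta> ^ period) * bias_norm)"
  proof (rule abs_weighted_bias_sum_le[OF c])
    fix t assume "t < period"
    then have "\<beta> ^ period \<le> \<beta> ^ t" "\<beta> ^ t \<le> 1"
      using discount by (auto intro: power_decreasing power_le_one)
    then show "\<bar>\<beta> ^ t - 1\<bar> \<le> 1 - \<beta> ^ period" by simp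
  qed
  finally have S_le: "\<bar>S\<bar> \<le> (1 - \<beta> ^ period) * (period * bias_norm)"
    by (simp add: algebra_simps)
  have "deviation c = \<beta> ^ period * deviation c - (1 - \<beta>) * S"
    using deviation_funpow[OF c, of period] funpow_period_idem[OF j, folded c_def] unfolding S_def by simp
  then have "(1 - \<beta> ^ period) * deviation c = - ((1 - \<beta>) * S)"
    by (simp add: algebra_simps)
  then have "\<bar>1 - \<beta> ^ period\<bar> * \<bar>deviation c\<bar> = \<bar>1 - \<beta>\<bar> * \<bar>S\<bar>"
    by (metis abs_minus_cancel abs_mult)
  then have "(1 - \<beta> ^ period) * \<bar>deviation c\<bar> = (1 - \<beta>) * \<bar>S\<bar>"
    using discount by (simp add: power_le_one)
  also have "\<dots> \<le> (1 - \<beta> ^ period) * ((1 - \<beta>) * (period * bias_norm))"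
    using S_le discount by (simp add: mult_left_mono mult.left_commute)
  finally have "(1 - \<beta> ^ period) * \<bar>deviation c\<bar> \<le> (1 - \<beta> ^ period) * ((1 - \<beta>) * (period * bias_norm))" .
  moreover have "0 < 1 - \<beta> ^ period"
    using discount period_pos by (simp add: power_less_one_iff)
  ultimately show ?thesis
    unfolding c_def by (simp add: mult_le_cancel_left_pos)
qed

lemma abs_deviation_le:
  assumes j: "j < N"
  shows "\<bar>deviation j\<bar> \<le> 2 * period * bias_norm * (1 - \<beta>)"
proof -
  let ?S = "\<Sum>t<period. \<beta> ^ t * bias ((s ^^ Suc t) j)"
  have "\<bar>deviation j\<bar> = \<bar>\<beta> ^ period * deviation ((s ^^ period) j) - (1 - \<beta>) * ?S\<bar>"
    by (subst deviation_funpow[OF j, of period]) (rule refl)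
  also have "\<dots> \<le> \<bar>\<beta> ^ period * deviation ((s ^^ period) j)\<bar> + \<bar>(1 - \<beta>) * ?S\<bar>"
    by (rule abs_triangle_ineq4)
  also have "\<dots> = \<beta> ^ period * \<bar>deviation ((s ^^ period) j)\<bar> + (1 - \<beta>) * \<bar>?S\<bar>"
    using discount by (simp add: abs_mult)
  also have "\<dots> \<le> 1 * ((1 - \<beta>) * (period * bias_norm)) + (1 - \<beta>) * (period * (1 * bias_norm))"
  proof (rule add_mono)
    show "\<beta> ^ period * \<bar>deviation ((s ^^ period) j)\<bar> \<le> 1 * ((1 - \<beta>) * (period * bias_norm))"
      using discount abs_deviation_periodic_le[OF j] by (intro mult_mono) (auto simp: power_le_one)
    have "\<bar>?S\<bar> \<le> period * (1 * bias_norm)"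
      using discount by (intro abs_weighted_bias_sum_le[OF j]) (simp add: power_le_one)
    then show "(1 - \<beta>) * \<bar>?S\<bar> \<le> (1 - \<beta>) * (period * (1 * bias_norm))"
      using discount by (intro mult_left_mono) auto
  qed
  finally show ?thesis by (simp add: algebra_simps)
qed

end

lemma discounted_value_expansion:
  fixes w :: "nat \<Rightarrow> real"
  assumes "\<And>j. j < N \<Longrightarrow> s j < N"
  obtains \<eta> x :: "nat \<Rightarrow> real" and K :: real where
    "\<And>\<beta> v j. 0 \<le> \<beta> \<Longrightarrow> \<beta> < 1 \<Longrightarrow> (\<forall>i<N. v i = w i + \<beta> * v (s i)) \<Longrightarrow> j < N \<Longrightarrow>
      \<bar>v j - \<eta> j / (1 - \<beta>) - x j\<bar> \<le> K * (1 - \<beta>)"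
proof -
  interpret weighted_self_map N s w by unfold_locales (rule assms)
  show ?thesis
  proof (rule that[where \<eta> = cycle_mean and x = bias and K = "2 * period * bias_norm"])
    fix \<beta> v j assume "0 \<le> \<beta>" "\<beta> < 1" "\<forall>i<N. v i = w i + \<beta> * v (s i)" "j < N"
    then interpret discounted_solution N s w \<beta> v by unfold_locales auto
    show "\<bar>v j - cycle_mean j / (1 - \<beta>) - bias j\<bar> \<le> 2 * period * bias_norm * (1 - \<beta>)"
      using abs_deviation_le[OF \<open>j < N\<close>] unfolding deviation_def .
  qed
qed

section \<open>Kohlberg's invariant half-line\<close>

lemma nonpos_of_bounded_multiples:
  fixes g R :: real
  assumes "infinite S" "\<And>n. n \<in> S \<Longrightarrow> (real n + 2) * g \<le> R"
  shows "g \<le> 0"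
proof (rule ccontr)
  assume "\<not> g \<le> 0"
  then have g: "g > 0" by simp
  obtain n where n: "n \<in> S" "n \<ge> nat \<lceil>R / g\<rceil>"
    using assms(1) unfolding infinite_nat_iff_unbounded_le by blast
  then have "R \<le> real n * g" using g by (simp add: field_simps)
  also have "\<dots> < (real n + 2) * g" using g by (simp add: algebra_simps)
  finally show False using assms(2)[OF n(1)] by simp
qed

lemma discounted_edge_algebra:
  fixes r a b K c e x e' x' :: real
  assumes r: "r \<ge> 1" and a: "\<bar>a\<bar> \<le> K / r" and b: "\<bar>b\<bar> \<le> K / r"
    and edge: "c \<le> (e * r + x + a) - (1 - 1 / r) * (e' * r + x' + b)"
  shows "r * (e' - e) \<le> e' + \<bar>x\<bar> + 2 * \<bar>x'\<bar> + 3 * K - c"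
    and "e' = e \<Longrightarrow> r * (c - (e + x - x')) \<le> \<bar>x'\<bar> + 3 * K"
proof -
  have r0: "r > 0" using r by simp
  have shrink: "\<bar>z / r\<bar> \<le> \<bar>z\<bar>" "\<bar>z\<bar> \<le> r * \<bar>z\<bar>" for z
    using r by (simp_all add: abs_divide divide_le_eq mult_le_cancel_left1 mult_le_cancel_right1)
  have "\<bar>r * a\<bar> \<le> K" "\<bar>r * b\<bar> \<le> K"
    using a b r0 by (simp_all add: abs_mult le_divide_eq mult.commute)
  then have K: "\<bar>a\<bar> \<le> K" "\<bar>b\<bar> \<le> K" "\<bar>r * a\<bar> \<le> K" "\<bar>r * b\<bar> \<le> K" "\<bar>b / r\<bar> \<le> K"
    using shrink[of a] shrink[of b] r0 by (auto simp: abs_mult)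
  have "\<bar>x' / r\<bar> \<le> \<bar>x'\<bar>" by (rule shrink)
  moreover have expand: "(e * r + x + a) - (1 - 1 / r) * (e' * r + x' + b)
      = r * (e - e') + e' + x - x' + x' / r + a - b + b / r"
    using r0 by (simp add: field_simps)
  ultimately show "r * (e' - e) \<le> e' + \<bar>x\<bar> + 2 * \<bar>x'\<bar> + 3 * K - c"
    using edge K abs_ge_self[of x] abs_ge_self[of x'] abs_ge_self[of "x' / r"] abs_ge_self[of a]
      abs_ge_minus_self[of b] abs_ge_self[of "b / r"] abs_ge_minus_self[of x']
    by (simp add: algebra_simps)
  assume "e' = e"
  then have "c - (e + x - x') \<le> x' / r + a - b + b / r" using edge expand by simp
  then have "r * (c - (e + x - x')) \<le> r * (x' / r + a - b + b / r)"
    using r0 by (simp add: mult_left_mono)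
  also have "\<dots> = x' + r * a - r * b + b" using r0 by (simp add: field_simps)
  also have "\<dots> \<le> \<bar>x'\<bar> + 3 * K"
    using K abs_ge_self[of x'] abs_ge_self[of "r * a"] abs_ge_minus_self[of "r * b"] abs_ge_self[of b]
    by linarith
  finally show "r * (c - (e + x - x')) \<le> \<bar>x'\<bar> + 3 * K" .
qed

(* Along S the values V n grow like (n + 2) eta + x: an edge from j to l that V n respects forces
   eta l \<le> eta j, and for equal growth rates the constant terms must respect it as well. *)
lemma discounted_edge_limit:
  fixes V :: "nat \<Rightarrow> nat \<Rightarrow> real"
  assumes S: "infinite S" and "j < N" "l < N"
    and approx: "\<And>n i. n \<in> S \<Longrightarrow> i < N \<Longrightarrow> \<bar>V n i - \<eta> i * (real n + 2) - x i\<bar> \<le> K / (real n + 2)"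
    and edge: "\<And>n. n \<in> S \<Longrightarrow> c + (1 - 1 / (real n + 2)) * V n l \<le> V n j"
  shows "\<eta> l \<le> \<eta> j \<and> (\<eta> l = \<eta> j \<longrightarrow> c \<le> \<eta> j + x j - x l)"
proof -
  have bounds: "(real n + 2) * (\<eta> l - \<eta> j) \<le> \<eta> l + \<bar>x j\<bar> + 2 * \<bar>x l\<bar> + 3 * K - c"
    "\<eta> l = \<eta> j \<Longrightarrow> (real n + 2) * (c - (\<eta> j + x j - x l)) \<le> \<bar>x l\<bar> + 3 * K"
    if n: "n \<in> S" for n
  proof -
    define a where "a = V n j - \<eta> j * (real n + 2) - x j"
    define b where "b = V n l - \<eta> l * (real n + 2) - x l"
    have "c \<le> (\<eta> j * (real n + 2) + x j + a) - (1 - 1 / (real n + 2)) * (\<eta> l * (real n + 2) + x l + b)"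
      using edge[OF n] unfolding a_def b_def by simp
    moreover have "\<bar>a\<bar> \<le> K / (real n + 2)" "\<bar>b\<bar> \<le> K / (real n + 2)"
      using approx[OF n] assms(2,3) unfolding a_def b_def by auto
    ultimately show "(real n + 2) * (\<eta> l - \<eta> j) \<le> \<eta> l + \<bar>x j\<bar> + 2 * \<bar>x l\<bar> + 3 * K - c"
      "\<eta> l = \<eta> j \<Longrightarrow> (real n + 2) * (c - (\<eta> j + x j - x l)) \<le> \<bar>x l\<bar> + 3 * K"
      using discounted_edge_algebra[of "real n + 2" a K b c "\<eta> j" "x j" "\<eta> l" "x l"] by auto
  qed
  have "\<eta> l - \<eta> j \<le> 0" using nonpos_of_bounded_multiples[OF S] bounds(1) by blast
  moreover have "c - (\<eta> j + x j - x l) \<le> 0" if "\<eta> l = \<eta> j"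
    using nonpos_of_bounded_multiples[OF S] bounds(2) that by blast
  ultimately show ?thesis by simp
qed

lemma eventually_lex_le:
  fixes e e' c c' :: real
  assumes "e \<le> e'" "e = e' \<longrightarrow> c \<le> c'"
  shows "\<forall>\<^sub>F t in at_top. t * e + c \<le> t * e' + c'"
proof (cases "e = e'")
  case False
  then have gap: "e' - e > 0" using assms by simp
  have "\<forall>\<^sub>F t in at_top. t \<ge> (c - c') / (e' - e)" by (rule eventually_ge_at_top)
  then show ?thesis
    by (rule eventually_mono) (use gap in \<open>simp add: divide_le_eq algebra_simps\<close>)
qed (use assms in simp)

lemma half_line_of_lex_conditions:
  assumes A: "no_zero_column M N A" and B: "no_zero_row M N B"
    and \<tau>: "\<tau> \<in> min_strategies M N A" and \<sigma>: "\<sigma> \<in> max_strategies M N B"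
    and lex_min: "\<And>j l. j < N \<Longrightarrow> l < N \<Longrightarrow> B (\<tau> j) l \<noteq> -\<infinity> \<Longrightarrow> \<eta> l \<le> \<eta> j \<and>
      (\<eta> l = \<eta> j \<longrightarrow> - real_of_ereal (A (\<tau> j) j) + real_of_ereal (B (\<tau> j) l) + x l \<le> x j + \<eta> j)"
    and lex_max: "\<And>j k. j < N \<Longrightarrow> k < M \<Longrightarrow> A k j \<noteq> -\<infinity> \<Longrightarrow> \<eta> j \<le> \<eta> (\<sigma> k) \<and>
      (\<eta> j = \<eta> (\<sigma> k) \<longrightarrow> x j + \<eta> j \<le> - real_of_ereal (A k j) + real_of_ereal (B k (\<sigma> k)) + x (\<sigma> k))"
  obtains T where
    "\<forall>t\<ge>T. \<forall>j<N. minmax_map M N (restrict_min A \<tau>) B (\<lambda>l. x l + t * \<eta> l) j \<le> x j + (t + 1) * \<eta> j"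
    "\<forall>t\<ge>T. \<forall>j<N. x j + (t + 1) * \<eta> j \<le> minmax_map M N A (restrict_max B \<sigma>) (\<lambda>l. x l + t * \<eta> l) j"
proof -
  let ?a = "\<lambda>k j. real_of_ereal (A k j)" and ?b = "\<lambda>k l. real_of_ereal (B k l)"
  define lower where "lower t \<longleftrightarrow> (\<forall>j\<in>{..<N}. \<forall>l\<in>{l. l < N \<and> B (\<tau> j) l \<noteq> -\<infinity>}.
      t * \<eta> l + (- ?a (\<tau> j) j + ?b (\<tau> j) l + x l) \<le> t * \<eta> j + (x j + \<eta> j))" for t :: real
  define upper where "upper t \<longleftrightarrow> (\<forall>j\<in>{..<N}. \<forall>k\<in>{k. k < M \<and> A k j \<noteq> -\<infinity>}.
      t * \<eta> j + (x j + \<eta> j) \<le> t * \<eta> (\<sigma> k) + (- ?a k j + ?b k (\<sigma> k) + x (\<sigma> k)))" for t :: real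
  have "\<forall>\<^sub>F t in at_top. lower t"
    unfolding lower_def using lex_min by (intro eventually_ball_finite ballI eventually_lex_le) auto
  moreover have "\<forall>\<^sub>F t in at_top. upper t"
    unfolding upper_def using lex_max by (intro eventually_ball_finite ballI eventually_lex_le) auto
  ultimately have "\<forall>\<^sub>F t in at_top. lower t \<and> upper t" by (rule eventually_conj)
  then obtain T where T: "\<And>t. t \<ge> T \<Longrightarrow> lower t \<and> upper t"
    unfolding eventually_at_top_linorder by blast
  show ?thesis
  proof (rule that; intro allI impI)
    fix t j assume t: "T \<le> t" and j: "j < N"
    let ?u = "\<lambda>l. x l + t * \<eta> l"
    obtain l where l: "l < N" "B (\<tau> j) l \<noteq> -\<infinity>" "maxplus_row N B (\<tau> j) ?u = ?b (\<tau> j) l + ?u l"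
      using maxplus_row_attained[OF B min_strategyD(1)[OF \<tau> j]] .
    have "minmax_map M N (restrict_min A \<tau>) B ?u j = t * \<eta> l + (- ?a (\<tau> j) j + ?b (\<tau> j) l + x l)"
      using minmax_map_restrict_min[OF \<tau> j] l(3) by simp
    also have "\<dots> \<le> t * \<eta> j + (x j + \<eta> j)" using T[OF t] j l(1,2) unfolding lower_def by blast
    finally show "minmax_map M N (restrict_min A \<tau>) B ?u j \<le> x j + (t + 1) * \<eta> j"
      by (simp add: algebra_simps)
  next
    fix t j assume t: "T \<le> t" and j: "j < N"
    let ?u = "\<lambda>l. x l + t * \<eta> l"
    obtain k where k: "k < M" "A k j \<noteq> -\<infinity>"
      "minmax_map M N A (restrict_max B \<sigma>) ?u j = - ?a k j + maxplus_row N (restrict_max B \<sigma>) k ?u"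
      using minmax_map_attained[OF A j] .
    have "x j + (t + 1) * \<eta> j = t * \<eta> j + (x j + \<eta> j)" by (simp add: algebra_simps)
    also have "\<dots> \<le> t * \<eta> (\<sigma> k) + (- ?a k j + ?b k (\<sigma> k) + x (\<sigma> k))"
      using T[OF t] j k(1,2) unfolding upper_def by blast
    also have "\<dots> = minmax_map M N A (restrict_max B \<sigma>) ?u j"
      unfolding k(3) maxplus_row_restrict_max[OF \<sigma> k(1)] by simp
    finally show "x j + (t + 1) * \<eta> j \<le> minmax_map M N A (restrict_max B \<sigma>) ?u j" .
  qed
qed

(* v is the value of the discounted game, v = A^sharp B (beta v), and the positional strategies
   tau and sigma attain the Min and the Max in it. *)
definition discounted_optimal ::
  "nat \<Rightarrow> nat \<Rightarrow> (nat \<Rightarrow> nat \<Rightarrow> ereal) \<Rightarrow> (nat \<Rightarrow> nat \<Rightarrow> ereal) \<Rightarrow> real \<Rightarrow> (nat \<Rightarrow> real)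
    \<Rightarrow> (nat \<Rightarrow> nat) \<Rightarrow> (nat \<Rightarrow> nat) \<Rightarrow> bool" where
  "discounted_optimal M N A B \<beta> v \<tau> \<sigma> \<longleftrightarrow>
     \<tau> \<in> min_strategies M N A \<and> \<sigma> \<in> max_strategies M N B \<and>
     (\<forall>j<N. v j = - real_of_ereal (A (\<tau> j) j) + maxplus_row N B (\<tau> j) (\<lambda>l. \<beta> * v l)) \<and>
     (\<forall>j<N. \<forall>k<M. A k j \<noteq> -\<infinity> \<longrightarrow> v j \<le> - real_of_ereal (A k j) + maxplus_row N B k (\<lambda>l. \<beta> * v l)) \<and>
     (\<forall>k<M. maxplus_row N B k (\<lambda>l. \<beta> * v l) = real_of_ereal (B k (\<sigma> k)) + \<beta> * v (\<sigma> k))"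

lemma exists_discounted_optimal:
  assumes A: "no_zero_column M N A" and B: "no_zero_row M N B" and "0 \<le> \<beta>" "\<beta> < 1"
  shows "\<exists>v \<tau> \<sigma>. discounted_optimal M N A B \<beta> v \<tau> \<sigma>"
proof -
  obtain v where v: "\<forall>j<N. minmax_map M N A B (\<lambda>l. \<beta> * v l) j = v j"
    using topical_discounted_fixpoint[OF topical_minmax_map[OF A B] assms(3,4)] .
  obtain \<tau> where \<tau>: "\<tau> \<in> min_strategies M N A"
    "\<forall>j<N. minmax_map M N A B (\<lambda>l. \<beta> * v l) j = minmax_map M N (restrict_min A \<tau>) B (\<lambda>l. \<beta> * v l) j"
    using exists_optimal_min_strategy[OF A] .
  obtain \<sigma> where \<sigma>: "\<sigma> \<in> max_strategies M N B"
    "\<forall>k<M. maxplus_row N B k (\<lambda>l. \<beta> * v l) = maxplus_row N (restrict_max B \<sigma>) k (\<lambda>l. \<beta> * v l)"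
    using exists_optimal_max_strategy[OF B] .
  have v_eq: "v j = minmax_map M N A B (\<lambda>l. \<beta> * v l) j" if "j < N" for j
    using v that by simp
  have "v j = - real_of_ereal (A (\<tau> j) j) + maxplus_row N B (\<tau> j) (\<lambda>l. \<beta> * v l)" if "j < N" for j
  proof -
    have "v j = minmax_map M N (restrict_min A \<tau>) B (\<lambda>l. \<beta> * v l) j"
      using v_eq \<tau>(2) that by simp
    then show ?thesis unfolding minmax_map_restrict_min[OF \<tau>(1) that] .
  qed
  moreover have "v j \<le> - real_of_ereal (A k j) + maxplus_row N B k (\<lambda>l. \<beta> * v l)"
    if "j < N" "k < M" "A k j \<noteq> -\<infinity>" for j k
    unfolding v_eq[OF that(1)] using that(2,3) by (rule minmax_map_le)
  moreover have "maxplus_row N B k (\<lambda>l. \<beta> * v l) = real_of_ereal (B k (\<sigma> k)) + \<beta> * v (\<sigma> k)"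
    if "k < M" for k
    using \<sigma>(2) maxplus_row_restrict_max[OF \<sigma>(1) that] that by simp
  ultimately have "discounted_optimal M N A B \<beta> v \<tau> \<sigma>"
    unfolding discounted_optimal_def using \<tau>(1) \<sigma>(1) by blast
  then show ?thesis by (intro exI)
qed

lemma discounted_optimal_orbit_eq:
  assumes "discounted_optimal M N A B \<beta> v \<tau> \<sigma>" "j < N"
  shows "v j = (- real_of_ereal (A (\<tau> j) j) + real_of_ereal (B (\<tau> j) (\<sigma> (\<tau> j)))) + \<beta> * v (\<sigma> (\<tau> j))"
  using assms min_strategyD(1)[of \<tau> M N A j] unfolding discounted_optimal_def by auto

lemma discounted_optimal_infinitely_often:
  assumes A: "no_zero_column M N A" and B: "no_zero_row M N B"
  obtains S \<tau> \<sigma> V where "infinite S" "\<tau> \<in> min_strategies M N A" "\<sigma> \<in> max_strategies M N B"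
    "\<And>n. n \<in> S \<Longrightarrow> discounted_optimal M N A B (1 - 1 / (real n + 2)) (V n) \<tau> \<sigma>"
proof -
  let ?\<beta> = "\<lambda>n::nat. 1 - 1 / (real n + 2)"
  have "\<exists>v \<tau> \<sigma>. discounted_optimal M N A B (?\<beta> n) v \<tau> \<sigma>" for n
    by (rule exists_discounted_optimal[OF A B]) (simp_all add: field_simps)
  then obtain V where "\<forall>n. \<exists>\<tau> \<sigma>. discounted_optimal M N A B (?\<beta> n) (V n) \<tau> \<sigma>"
    using choice[of "\<lambda>n v. \<exists>\<tau> \<sigma>. discounted_optimal M N A B (?\<beta> n) v \<tau> \<sigma>"] by blast
  then obtain Tau where "\<forall>n. \<exists>\<sigma>. discounted_optimal M N A B (?\<beta> n) (V n) (Tau n) \<sigma>"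
    using choice[of "\<lambda>n \<tau>. \<exists>\<sigma>. discounted_optimal M N A B (?\<beta> n) (V n) \<tau> \<sigma>"] by blast
  then obtain Sigma where opt: "\<And>n. discounted_optimal M N A B (?\<beta> n) (V n) (Tau n) (Sigma n)"
    using choice[of "\<lambda>n \<sigma>. discounted_optimal M N A B (?\<beta> n) (V n) (Tau n) \<sigma>"] by blast
  have strategies: "Tau n \<in> min_strategies M N A" "Sigma n \<in> max_strategies M N B" for n
    using opt[of n] unfolding discounted_optimal_def by simp_all
  have "range (\<lambda>n. (Tau n, Sigma n)) \<subseteq> min_strategies M N A \<times> max_strategies M N B"
    using strategies by auto
  then have "finite (range (\<lambda>n. (Tau n, Sigma n)))"
    by (rule finite_subset) (intro finite_cartesian_product finite_min_strategies finite_max_strategies)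
  from pigeonhole_infinite[OF infinite_UNIV_nat this]
  obtain n0 where S: "infinite {n \<in> UNIV. (Tau n, Sigma n) = (Tau n0, Sigma n0)}" by blast
  show ?thesis
  proof (rule that[of "{n. (Tau n, Sigma n) = (Tau n0, Sigma n0)}"])
    show "infinite {n. (Tau n, Sigma n) = (Tau n0, Sigma n0)}" using S by simp
    show "Tau n0 \<in> min_strategies M N A" "Sigma n0 \<in> max_strategies M N B" by (rule strategies)+
    show "discounted_optimal M N A B (?\<beta> n) (V n) (Tau n0) (Sigma n0)"
      if "n \<in> {n. (Tau n, Sigma n) = (Tau n0, Sigma n0)}" for n
      using opt[of n] that by simp
  qed
qed

lemma discounted_values_stabilize:
  assumes A: "no_zero_column M N A" and B: "no_zero_row M N B"
  obtains S \<tau> \<sigma> V \<eta> x K where "infinite S" "\<tau> \<in> min_strategies M N A" "\<sigma> \<in> max_strategies M N B"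
    "\<And>n. n \<in> S \<Longrightarrow> discounted_optimal M N A B (1 - 1 / (real n + 2)) (V n) \<tau> \<sigma>"
    "\<And>n i. n \<in> S \<Longrightarrow> i < N \<Longrightarrow> \<bar>V n i - \<eta> i * (real n + 2) - x i\<bar> \<le> K / (real n + 2)"
proof -
  obtain S \<tau> \<sigma> V where S: "infinite S" and \<tau>: "\<tau> \<in> min_strategies M N A"
    and \<sigma>: "\<sigma> \<in> max_strategies M N B"
    and opt: "\<And>n. n \<in> S \<Longrightarrow> discounted_optimal M N A B (1 - 1 / (real n + 2)) (V n) \<tau> \<sigma>"
    using discounted_optimal_infinitely_often[OF A B] by blast
  define s where "s j = \<sigma> (\<tau> j)" for j
  define w where "w j = - real_of_ereal (A (\<tau> j) j) + real_of_ereal (B (\<tau> j) (s j))" for j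
  have "s j < N" if "j < N" for j
    unfolding s_def using max_strategyD(1)[OF \<sigma> min_strategyD(1)[OF \<tau> that]] .
  from discounted_value_expansion[of N s w, OF this]
  obtain \<eta> x K where expansion: "\<And>\<beta> v j. 0 \<le> \<beta> \<Longrightarrow> \<beta> < 1 \<Longrightarrow> (\<forall>i<N. v i = w i + \<beta> * v (s i)) \<Longrightarrow>
      j < N \<Longrightarrow> \<bar>v j - \<eta> j / (1 - \<beta>) - x j\<bar> \<le> K * (1 - \<beta>)" by blast
  show ?thesis
  proof (rule that[OF S \<tau> \<sigma> opt])
    fix n i assume n: "n \<in> S" and i: "i < N"
    let ?\<beta> = "1 - 1 / (real n + 2)"
    have "\<forall>i<N. V n i = w i + ?\<beta> * V n (s i)"
      unfolding w_def s_def using discounted_optimal_orbit_eq[OF opt[OF n]] by blast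
    moreover have "0 \<le> ?\<beta>" "?\<beta> < 1" by (simp_all add: field_simps)
    ultimately have "\<bar>V n i - \<eta> i / (1 - ?\<beta>) - x i\<bar> \<le> K * (1 - ?\<beta>)"
      using expansion i by blast
    then show "\<bar>V n i - \<eta> i * (real n + 2) - x i\<bar> \<le> K / (real n + 2)" by simp
  qed
qed

lemma invariant_half_line:
  assumes A: "no_zero_column M N A" and B: "no_zero_row M N B"
  obtains \<eta> x \<tau> \<sigma> T where "\<tau> \<in> min_strategies M N A" "\<sigma> \<in> max_strategies M N B"
    "\<forall>t\<ge>T. \<forall>j<N. minmax_map M N (restrict_min A \<tau>) B (\<lambda>l. x l + t * \<eta> l) j \<le> x j + (t + 1) * \<eta> j"
    "\<forall>t\<ge>T. \<forall>j<N. x j + (t + 1) * \<eta> j \<le> minmax_map M N A (restrict_max B \<sigma>) (\<lambda>l. x l + t * \<eta> l) j"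
proof -
  obtain S \<tau> \<sigma> V \<eta> x K where S: "infinite S" and \<tau>: "\<tau> \<in> min_strategies M N A"
    and \<sigma>: "\<sigma> \<in> max_strategies M N B"
    and opt: "\<And>n. n \<in> S \<Longrightarrow> discounted_optimal M N A B (1 - 1 / (real n + 2)) (V n) \<tau> \<sigma>"
    and approx: "\<And>n i. n \<in> S \<Longrightarrow> i < N \<Longrightarrow> \<bar>V n i - \<eta> i * (real n + 2) - x i\<bar> \<le> K / (real n + 2)"
    using discounted_values_stabilize[OF A B] by blast
  let ?a = "\<lambda>k j. real_of_ereal (A k j)" and ?b = "\<lambda>k l. real_of_ereal (B k l)"
    and ?u = "\<lambda>n l. (1 - 1 / (real n + 2)) * V n l"
  have lex_min: "\<eta> l \<le> \<eta> j \<and> (\<eta> l = \<eta> j \<longrightarrow> - ?a (\<tau> j) j + ?b (\<tau> j) l + x l \<le> x j + \<eta> j)"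
    if j: "j < N" and l: "l < N" "B (\<tau> j) l \<noteq> -\<infinity>" for j l
  proof -
    have "- ?a (\<tau> j) j + ?b (\<tau> j) l + ?u n l \<le> V n j" if n: "n \<in> S" for n
    proof -
      have "V n j = - ?a (\<tau> j) j + maxplus_row N B (\<tau> j) (?u n)"
        using opt[OF n] j unfolding discounted_optimal_def by blast
      then show ?thesis using maxplus_row_ge[of l N B "\<tau> j" "?u n", OF l] by simp
    qed
    from discounted_edge_limit[OF S j l(1) approx this] show ?thesis by (simp add: algebra_simps)
  qed
  have lex_max: "\<eta> j \<le> \<eta> (\<sigma> k) \<and>
      (\<eta> j = \<eta> (\<sigma> k) \<longrightarrow> x j + \<eta> j \<le> - ?a k j + ?b k (\<sigma> k) + x (\<sigma> k))"
    if j: "j < N" and k: "k < M" "A k j \<noteq> -\<infinity>" for j k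
  proof -
    have edge: "- (- ?a k j + ?b k (\<sigma> k)) + (1 - 1 / (real n + 2)) * - V n (\<sigma> k) \<le> - V n j"
      if n: "n \<in> S" for n
    proof -
      have "V n j \<le> - ?a k j + maxplus_row N B k (?u n)"
        using opt[OF n] j k unfolding discounted_optimal_def by blast
      also have "\<dots> = - ?a k j + ?b k (\<sigma> k) + ?u n (\<sigma> k)"
        using opt[OF n] k unfolding discounted_optimal_def by simp
      finally show ?thesis by simp
    qed
    have approx_neg: "\<bar>- V n i - - \<eta> i * (real n + 2) - - x i\<bar> \<le> K / (real n + 2)"
      if "n \<in> S" "i < N" for n i
      using approx[OF that] by (simp add: abs_minus_commute algebra_simps)
    from discounted_edge_limit[OF S j max_strategyD(1)[OF \<sigma> k(1)] approx_neg edge]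
    show ?thesis by auto
  qed
  obtain T where
    "\<forall>t\<ge>T. \<forall>j<N. minmax_map M N (restrict_min A \<tau>) B (\<lambda>l. x l + t * \<eta> l) j \<le> x j + (t + 1) * \<eta> j"
    "\<forall>t\<ge>T. \<forall>j<N. x j + (t + 1) * \<eta> j \<le> minmax_map M N A (restrict_max B \<sigma>) (\<lambda>l. x l + t * \<eta> l) j"
    using half_line_of_lex_conditions[OF A B \<tau> \<sigma> lex_min lex_max] by blast
  with \<tau> \<sigma> show ?thesis by (rule that)
qed

section \<open>The minimax identity\<close>

lemma bounded_drift_with_strategies:
  assumes A: "no_zero_column M N A" and B: "no_zero_row M N B"
  obtains \<eta> \<tau> \<sigma> where "\<tau> \<in> min_strategies M N A" "\<sigma> \<in> max_strategies M N B"
    "bounded_drift N (minmax_map M N A B) \<eta>"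
    "bounded_drift N (minmax_map M N (restrict_min A \<tau>) B) \<eta>"
    "bounded_drift N (minmax_map M N A (restrict_max B \<sigma>)) \<eta>"
proof -
  obtain \<eta> x \<tau> \<sigma> T where \<tau>: "\<tau> \<in> min_strategies M N A" and \<sigma>: "\<sigma> \<in> max_strategies M N B"
    and sub: "\<forall>t\<ge>T. \<forall>j<N. minmax_map M N (restrict_min A \<tau>) B (\<lambda>l. x l + t * \<eta> l) j \<le> x j + (t + 1) * \<eta> j"
    and super: "\<forall>t\<ge>T. \<forall>j<N. x j + (t + 1) * \<eta> j \<le> minmax_map M N A (restrict_max B \<sigma>) (\<lambda>l. x l + t * \<eta> l) j"
    by (rule invariant_half_line[OF A B])
  let ?f = "minmax_map M N A B" and ?f\<tau> = "minmax_map M N (restrict_min A \<tau>) B"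
    and ?f\<sigma> = "minmax_map M N A (restrict_max B \<sigma>)"
  have f: "topical N ?f" and f\<tau>: "topical N ?f\<tau>" and f\<sigma>: "topical N ?f\<sigma>"
    using A B no_zero_column_restrict_min[OF \<tau>] no_zero_row_restrict_max[OF \<sigma>]
    by (simp_all add: topical_minmax_map)
  obtain K where upper: "\<forall>k j. j < N \<longrightarrow> (?f\<tau> ^^ k) (\<lambda>_. 0) j \<le> real k * \<eta> j + K"
    using topical_orbit_upper_bound[OF f\<tau> sub] .
  obtain K' where lower: "\<forall>k j. j < N \<longrightarrow> real k * \<eta> j - K' \<le> (?f\<sigma> ^^ k) (\<lambda>_. 0) j"
    using topical_orbit_lower_bound[OF f\<sigma> super] .
  have \<sigma>_le: "(?f\<sigma> ^^ k) (\<lambda>_. 0) j \<le> (?f ^^ k) (\<lambda>_. 0) j" if "j < N" for k j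
    using minmax_map_restrict_max_le[OF \<sigma> A] f that by (rule funpow_le_funpow_topical)
  have le_\<tau>: "(?f ^^ k) (\<lambda>_. 0) j \<le> (?f\<tau> ^^ k) (\<lambda>_. 0) j" if "j < N" for k j
    using minmax_map_le_restrict_min[OF \<tau>] f\<tau> that by (rule funpow_le_funpow_topical)
  show ?thesis
  proof (rule that[OF \<tau> \<sigma>])
    show "bounded_drift N ?f \<eta>"
      using lower upper \<sigma>_le le_\<tau> by (rule bounded_drift_between)
    show "bounded_drift N ?f\<tau> \<eta>"
      using lower upper order_trans[OF \<sigma>_le le_\<tau>] order_refl by (rule bounded_drift_between)
    show "bounded_drift N ?f\<sigma> \<eta>"
      using lower upper order_refl order_trans[OF \<sigma>_le le_\<tau>] by (rule bounded_drift_between)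
  qed
qed

lemma Min_le_Min_pointwise:
  fixes a b :: "nat \<Rightarrow> real"
  assumes "0 < N" "\<And>i. i < N \<Longrightarrow> a i \<le> b i"
  shows "Min {a i | i. i < N} \<le> Min {b i | i. i < N}"
proof -
  obtain i where i: "i < N" "Min {b i | i. i < N} = b i"
    using Min_in[of "{b i | i. i < N}"] assms(1) by auto
  have "Min {a i | i. i < N} \<le> a i" by (rule Min_le) (use i in auto)
  then show ?thesis using assms(2)[OF i(1)] i(2) by simp
qed

lemma Phi_val_le_restrict_min:
  assumes A: "no_zero_column M N A" and B: "no_zero_row M N B" and \<tau>: "\<tau> \<in> min_strategies M N A"
    and "0 < N"
  shows "Phi_val M N A B \<le> Phi_val M N (restrict_min A \<tau>) B"
proof -
  obtain \<eta> where \<eta>: "bounded_drift N (minmax_map M N A B) \<eta>"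
    using bounded_drift_with_strategies[OF A B] by blast
  obtain \<eta>' where \<eta>': "bounded_drift N (minmax_map M N (restrict_min A \<tau>) B) \<eta>'"
    using bounded_drift_with_strategies[OF no_zero_column_restrict_min[OF \<tau>] B] by blast
  have "\<eta> i \<le> \<eta>' i" if "i < N" for i
    using \<eta> \<eta>' that
  proof (rule bounded_drift_le)
    show "(minmax_map M N A B ^^ k) (\<lambda>_. 0) i \<le> (minmax_map M N (restrict_min A \<tau>) B ^^ k) (\<lambda>_. 0) i" for k
      using minmax_map_le_restrict_min[OF \<tau>] topical_minmax_map[OF no_zero_column_restrict_min[OF \<tau>] B] that
      by (rule funpow_le_funpow_topical)
  qed
  then show ?thesis
    unfolding Phi_val_eq_Min[OF \<eta>] Phi_val_eq_Min[OF \<eta>'] using \<open>0 < N\<close> by (rule Min_le_Min_pointwise[rotated])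
qed

lemma Phi_val_restrict_max_le:
  assumes A: "no_zero_column M N A" and B: "no_zero_row M N B" and \<sigma>: "\<sigma> \<in> max_strategies M N B"
    and "0 < N"
  shows "Phi_val M N A (restrict_max B \<sigma>) \<le> Phi_val M N A B"
proof -
  obtain \<eta> where \<eta>: "bounded_drift N (minmax_map M N A B) \<eta>"
    using bounded_drift_with_strategies[OF A B] by blast
  obtain \<eta>' where \<eta>': "bounded_drift N (minmax_map M N A (restrict_max B \<sigma>)) \<eta>'"
    using bounded_drift_with_strategies[OF A no_zero_row_restrict_max[OF \<sigma>]] by blast
  have "\<eta>' i \<le> \<eta> i" if "i < N" for i
    using \<eta>' \<eta> that
  proof (rule bounded_drift_le)
    show "(minmax_map M N A (restrict_max B \<sigma>) ^^ k) (\<lambda>_. 0) i \<le> (minmax_map M N A B ^^ k) (\<lambda>_. 0) i" for k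
      using minmax_map_restrict_max_le[OF \<sigma> A] topical_minmax_map[OF A B] that
      by (rule funpow_le_funpow_topical)
  qed
  then show ?thesis
    unfolding Phi_val_eq_Min[OF \<eta>] Phi_val_eq_Min[OF \<eta>'] using \<open>0 < N\<close> by (rule Min_le_Min_pointwise[rotated])
qed

theorem Phi_val_minimax:
  assumes A: "no_zero_column M N A" and B: "no_zero_row M N B" and "0 < N"
  shows "Min {Phi_val M N (restrict_min A \<tau>) B | \<tau>. \<tau> \<in> min_strategies M N A} = Phi_val M N A B
       \<and> Phi_val M N A B = Max {Phi_val M N A (restrict_max B \<sigma>) | \<sigma>. \<sigma> \<in> max_strategies M N B}"
proof
  obtain \<eta> \<tau>0 \<sigma>0 where \<tau>0: "\<tau>0 \<in> min_strategies M N A" and \<sigma>0: "\<sigma>0 \<in> max_strategies M N B"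
    and drift: "bounded_drift N (minmax_map M N A B) \<eta>"
      "bounded_drift N (minmax_map M N (restrict_min A \<tau>0) B) \<eta>"
      "bounded_drift N (minmax_map M N A (restrict_max B \<sigma>0)) \<eta>"
    using bounded_drift_with_strategies[OF A B] by blast
  show "Min {Phi_val M N (restrict_min A \<tau>) B | \<tau>. \<tau> \<in> min_strategies M N A} = Phi_val M N A B"
  proof (rule Min_eqI)
    show "finite {Phi_val M N (restrict_min A \<tau>) B | \<tau>. \<tau> \<in> min_strategies M N A}"
      using finite_min_strategies by simp
    show "Phi_val M N A B \<le> y" if "y \<in> {Phi_val M N (restrict_min A \<tau>) B | \<tau>. \<tau> \<in> min_strategies M N A}" for y
      using that Phi_val_le_restrict_min[OF A B _ \<open>0 < N\<close>] by blast
    have "Phi_val M N (restrict_min A \<tau>0) B = Phi_val M N A B"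
      unfolding Phi_val_eq_Min[OF drift(1)] Phi_val_eq_Min[OF drift(2)] ..
    with \<tau>0 show "Phi_val M N A B \<in> {Phi_val M N (restrict_min A \<tau>) B | \<tau>. \<tau> \<in> min_strategies M N A}"
      by (intro CollectI exI[of _ \<tau>0]) simp
  qed
  show "Phi_val M N A B = Max {Phi_val M N A (restrict_max B \<sigma>) | \<sigma>. \<sigma> \<in> max_strategies M N B}"
  proof (rule Max_eqI[symmetric])
    show "finite {Phi_val M N A (restrict_max B \<sigma>) | \<sigma>. \<sigma> \<in> max_strategies M N B}"
      using finite_max_strategies by simp
    show "y \<le> Phi_val M N A B" if "y \<in> {Phi_val M N A (restrict_max B \<sigma>) | \<sigma>. \<sigma> \<in> max_strategies M N B}" for y
      using that Phi_val_restrict_max_le[OF A B _ \<open>0 < N\<close>] by blast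
    have "Phi_val M N A (restrict_max B \<sigma>0) = Phi_val M N A B"
      unfolding Phi_val_eq_Min[OF drift(1)] Phi_val_eq_Min[OF drift(3)] ..
    with \<sigma>0 show "Phi_val M N A B \<in> {Phi_val M N A (restrict_max B \<sigma>) | \<sigma>. \<sigma> \<in> max_strategies M N B}"
      by (intro CollectI exI[of _ \<sigma>0]) simp
  qed
qed

theorem proposition5:
  fixes m n :: nat
    and U V :: "nat \<Rightarrow> nat \<Rightarrow> ereal"
    and b d p q :: "nat \<Rightarrow> ereal"
    and lam :: real
  assumes U: "\<forall>i<m. \<forall>j<n. U i j \<noteq> \<infinity>"
    and V: "\<forall>i<m. \<forall>j<n. V i j \<noteq> \<infinity>"
    and b: "\<forall>i<m. b i \<noteq> \<infinity>"
    and d: "\<forall>i<m. d i \<noteq> \<infinity>"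
    and p: "\<forall>j<n. p j \<noteq> \<infinity>"
    and q: "\<forall>j<n. q j \<noteq> -\<infinity>"
    and colA: "\<forall>j<n+1. \<exists>i<m+n+1. matA m n U b p q i j \<noteq> -\<infinity>"
    and rowB: "\<forall>i<m+n+1. \<exists>j<n+1. matB m n V d lam i j \<noteq> -\<infinity>"
  shows "Min {Phi_val (m+n+1) (n+1) (restrict_min (matA m n U b p q) \<tau>) (matB m n V d lam)
              | \<tau>. \<tau> \<in> min_strategies (m+n+1) (n+1) (matA m n U b p q)}
           = Phi_val (m+n+1) (n+1) (matA m n U b p q) (matB m n V d lam)
       \<and> Phi_val (m+n+1) (n+1) (matA m n U b p q) (matB m n V d lam)
           = Max {Phi_val (m+n+1) (n+1) (matA m n U b p q) (restrict_max (matB m n V d lam) \<sigma>)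
              | \<sigma>. \<sigma> \<in> max_strategies (m+n+1) (n+1) (matB m n V d lam)}"
proof -
  have "no_zero_column (m+n+1) (n+1) (matA m n U b p q)"
    using colA unfolding no_zero_column_def .
  moreover have "no_zero_row (m+n+1) (n+1) (matB m n V d lam)"
    using rowB unfolding no_zero_row_def .
  ultimately show ?thesis by (rule Phi_val_minimax) simp
qed

end
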